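(* Let $\Omega=\mathbb N$, $\Sigma=2^{\mathbb N}$ and $\mu$ a finite measure with $\mu(\{n\})>0$ for all $n$, and let $X(\mu)$ be a Banach sequence space (a vector space of real sequences with a complete norm). Then $X(\mu)$ has an equivalent norm under which it is a Banach function space if and only if $X(\mu)$ is a Banach rectangular function space.
   Context: Rectangular: for some $C>0$, $\chi_Af\in X(\mu)$ and $\|\chi_Af\|\le C\|f\|$ for all $f\in X(\mu)$, $A\subseteq\mathbb N$. A Banach function space (here) is a space of real sequences with a complete norm which is an ideal (if $|f|\le|g|$ coordinatewise and $g$ is in the space, then $f$ is in the space) and whose norm satisfies $\|f\|\le\|g\|$ whenever $|f|\le|g|$. *)

theory Defs
  imports "HOL-Analysis.Analysis"
begin

definition seq_space :: "(nat \<Rightarrow> real) set \<Rightarrow> bool" where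
  "seq_space X \<longleftrightarrow> (\<lambda>n. 0) \<in> X \<and>
     (\<forall>f\<in>X. \<forall>g\<in>X. (\<lambda>n. f n + g n) \<in> X) \<and>
     (\<forall>c::real. \<forall>f\<in>X. (\<lambda>n. c * f n) \<in> X)"

definition seq_norm_on :: "(nat \<Rightarrow> real) set \<Rightarrow> ((nat \<Rightarrow> real) \<Rightarrow> real) \<Rightarrow> bool" where
  "seq_norm_on X N \<longleftrightarrow>
     (\<forall>f\<in>X. N f \<ge> 0) \<and>
     (\<forall>f\<in>X. N f = 0 \<longleftrightarrow> f = (\<lambda>n. 0)) \<and>
     (\<forall>c::real. \<forall>f\<in>X. N (\<lambda>n. c * f n) = \<bar>c\<bar> * N f) \<and>
     (\<forall>f\<in>X. \<forall>g\<in>X. N (\<lambda>n. f n + g n) \<le> N f + N g)"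

definition seq_norm_complete :: "(nat \<Rightarrow> real) set \<Rightarrow> ((nat \<Rightarrow> real) \<Rightarrow> real) \<Rightarrow> bool" where
  "seq_norm_complete X N \<longleftrightarrow>
     (\<forall>u :: nat \<Rightarrow> nat \<Rightarrow> real. (\<forall>k. u k \<in> X) \<longrightarrow>
        (\<forall>e>0. \<exists>M. \<forall>j\<ge>M. \<forall>k\<ge>M. N (\<lambda>n. u j n - u k n) < e) \<longrightarrow>
        (\<exists>f\<in>X. (\<lambda>k. N (\<lambda>n. u k n - f n)) \<longlonglongrightarrow> 0))"

definition banach_seq_space :: "(nat \<Rightarrow> real) set \<Rightarrow> ((nat \<Rightarrow> real) \<Rightarrow> real) \<Rightarrow> bool" where
  "banach_seq_space X N \<longleftrightarrow> seq_space X \<and> seq_norm_on X N \<and> seq_norm_complete X N"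

definition equivalent_norms :: "(nat \<Rightarrow> real) set \<Rightarrow> ((nat \<Rightarrow> real) \<Rightarrow> real) \<Rightarrow> ((nat \<Rightarrow> real) \<Rightarrow> real) \<Rightarrow> bool" where
  "equivalent_norms X N1 N2 \<longleftrightarrow>
     (\<exists>a>0. \<exists>b>0. \<forall>f\<in>X. a * N1 f \<le> N2 f \<and> N2 f \<le> b * N1 f)"

definition banach_function_space :: "(nat \<Rightarrow> real) set \<Rightarrow> ((nat \<Rightarrow> real) \<Rightarrow> real) \<Rightarrow> bool" where
  "banach_function_space X N \<longleftrightarrow> banach_seq_space X N \<and>
     (\<forall>f g. g \<in> X \<longrightarrow> (\<forall>n. \<bar>f n\<bar> \<le> \<bar>g n\<bar>) \<longrightarrow> f \<in> X \<and> N f \<le> N g)"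

definition rectangular :: "(nat \<Rightarrow> real) set \<Rightarrow> ((nat \<Rightarrow> real) \<Rightarrow> real) \<Rightarrow> bool" where
  "rectangular X N \<longleftrightarrow> (\<exists>C>0. \<forall>f\<in>X. \<forall>A :: nat set.
     (\<lambda>n. indicator A n * f n) \<in> X \<and> N (\<lambda>n. indicator A n * f n) \<le> C * N f)"

definition banach_rectangular_function_space :: "(nat \<Rightarrow> real) set \<Rightarrow> ((nat \<Rightarrow> real) \<Rightarrow> real) \<Rightarrow> bool" where
  "banach_rectangular_function_space X N \<longleftrightarrow> banach_seq_space X N \<and> rectangular X N"

end

theory Submission
  imports Defs
begin

(* If N' is a lattice norm with a * N <= N' <= b * N, then N (indicator A * f) <= (b / a) * N f.
   Conversely, let N (indicator A * f) <= C * N f for all A. Rectangularity makes every coordinate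
   functional bounded. A multiplier 0 <= h <= 1 has a binary expansion
   h = (SUM k. 2^-(k+1) * indicator (A k)), so the series (SUM k. 2^-(k+1) * indicator (A k) * g)
   converges absolutely in X; its sum agrees coordinatewise with h * g, whence
   N (h * g) <= C * N g. Splitting into positive and negative parts gives N (h * g) <= 2 * C * N g
   whenever |h| <= 1, so f |-> sup {N (h * f) | |h| <= 1} is an equivalent norm which is monotone,
   and X is an ideal. *)

lemma dyadic_expansion:
  fixes x :: real
  assumes "0 \<le> x" and "x \<le> 1"
  obtains D :: "nat set" where "(\<lambda>k. (1/2)^Suc k * indicator D k) sums x"
proof -
  \<comment> \<open>greedy digits: r k is the remainder left after the first k binary digits\<close>
  define r where "r = rec_nat x (\<lambda>k r. if (1/2)^Suc k \<le> r then r - (1/2::real)^Suc k else r)"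
  define D where "D = {k. (1/2)^Suc k \<le> r k}"
  have r_Suc: "r (Suc k) = r k - (1/2)^Suc k * indicator D k" for k
    by (simp add: r_def D_def indicator_def)
  have r_bounds: "0 \<le> r k \<and> r k \<le> (1/2)^k" for k
    by (induction k) (auto simp: r_Suc D_def indicator_def assms r_def[THEN fun_cong, of 0])
  have partial_sum: "(\<Sum>k<m. (1/2)^Suc k * indicator D k) = x - r m" for m
    by (induction m) (simp_all add: r_Suc r_def[THEN fun_cong, of 0])
  have "r \<longlonglongrightarrow> 0"
  proof (rule Lim_null_comparison)
    show "\<forall>\<^sub>F k in sequentially. norm (r k) \<le> (1/2)^k"
      using r_bounds by (auto intro: always_eventually)
  qed (simp add: LIMSEQ_power_zero)
  then have "(\<lambda>m. x - r m) \<longlonglongrightarrow> x - 0"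
    by (intro tendsto_diff tendsto_const)
  then have "(\<lambda>k. (1/2)^Suc k * indicator D k) sums x"
    unfolding sums_def partial_sum by simp
  then show ?thesis by (rule that)
qed

lemma dyadic_expansion_fun:
  fixes h :: "'a \<Rightarrow> real"
  assumes "\<And>x. 0 \<le> h x \<and> h x \<le> 1"
  obtains A :: "nat \<Rightarrow> 'a set" where "\<And>x. (\<lambda>k. (1/2)^Suc k * indicator (A k) x) sums h x"
proof -
  have "\<forall>x. \<exists>D. (\<lambda>k. (1/2)^Suc k * indicator D k) sums h x"
    using dyadic_expansion assms by metis
  from choice[OF this] obtain D
    where D: "\<forall>x. (\<lambda>k. (1/2::real)^Suc k * indicator (D x) k) sums h x" ..
  have "(\<lambda>k. (1/2)^Suc k * indicator {x. k \<in> D x} x) sums h x" for x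
    using D by (simp add: indicator_def)
  then show ?thesis by (rule that)
qed

locale banach_sequence_space =
  fixes X :: "(nat \<Rightarrow> real) set" and N :: "(nat \<Rightarrow> real) \<Rightarrow> real"
  assumes banach: "banach_seq_space X N"
begin

lemma zero_in: "(\<lambda>n. 0) \<in> X"
  and add_in: "f \<in> X \<Longrightarrow> g \<in> X \<Longrightarrow> (\<lambda>n. f n + g n) \<in> X"
  and scale_in: "f \<in> X \<Longrightarrow> (\<lambda>n. c * f n) \<in> X"
  using banach unfolding banach_seq_space_def seq_space_def by blast+

lemma norm_nonneg: "f \<in> X \<Longrightarrow> N f \<ge> 0"
  and norm_eq_zero_iff: "f \<in> X \<Longrightarrow> N f = 0 \<longleftrightarrow> f = (\<lambda>n. 0)"
  and norm_scale: "f \<in> X \<Longrightarrow> N (\<lambda>n. c * f n) = \<bar>c\<bar> * N f"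
  and norm_triangle: "f \<in> X \<Longrightarrow> g \<in> X \<Longrightarrow> N (\<lambda>n. f n + g n) \<le> N f + N g"
  using banach unfolding banach_seq_space_def seq_norm_on_def by blast+

lemma complete:
  "(\<And>k. u k \<in> X) \<Longrightarrow> \<forall>e>0. \<exists>M. \<forall>j\<ge>M. \<forall>k\<ge>M. N (\<lambda>n. u j n - u k n) < e \<Longrightarrow>
    \<exists>f\<in>X. (\<lambda>k. N (\<lambda>n. u k n - f n)) \<longlonglongrightarrow> 0"
  using banach unfolding banach_seq_space_def seq_norm_complete_def by blast

lemma norm_zero: "N (\<lambda>n. 0) = 0"
  using norm_eq_zero_iff zero_in by blast

lemma diff_in: "f \<in> X \<Longrightarrow> g \<in> X \<Longrightarrow> (\<lambda>n. f n - g n) \<in> X"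
  using add_in[of f "\<lambda>n. -1 * g n"] scale_in[of g "-1"] by simp

lemma norm_minus_commute:
  assumes "f \<in> X" "g \<in> X"
  shows "N (\<lambda>n. f n - g n) = N (\<lambda>n. g n - f n)"
  using norm_scale[OF diff_in[OF assms], of "-1"] by simp

lemma norm_diff_le:
  assumes "f \<in> X" "g \<in> X"
  shows "N (\<lambda>n. f n - g n) \<le> N f + N g"
  using norm_triangle[of f "\<lambda>n. -1 * g n"] norm_scale[of g "-1"] scale_in[of g "-1"] assms by simp

lemma sum_in: "(\<And>i. i \<in> I \<Longrightarrow> v i \<in> X) \<Longrightarrow> (\<lambda>n. \<Sum>i\<in>I. v i n) \<in> X"
  by (induction I rule: infinite_finite_induct) (auto intro: zero_in add_in)

lemma norm_sum_le: "(\<And>i. i \<in> I \<Longrightarrow> v i \<in> X) \<Longrightarrow> N (\<lambda>n. \<Sum>i\<in>I. v i n) \<le> (\<Sum>i\<in>I. N (v i))"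
proof (induction I rule: infinite_finite_induct)
  case (insert i I)
  then have "N (\<lambda>n. v i n + (\<Sum>i\<in>I. v i n)) \<le> N (v i) + N (\<lambda>n. \<Sum>i\<in>I. v i n)"
    by (intro norm_triangle sum_in) auto
  with insert show ?case by simp
qed (simp_all add: norm_zero)

lemma complete_if_equivalent_norm:
  assumes "equivalent_norms X N N'"
  shows "seq_norm_complete X N'"
  unfolding seq_norm_complete_def
proof (intro allI impI)
  fix u :: "nat \<Rightarrow> nat \<Rightarrow> real"
  assume "\<forall>k. u k \<in> X" and cauchy: "\<forall>e>0. \<exists>M. \<forall>j\<ge>M. \<forall>k\<ge>M. N' (\<lambda>n. u j n - u k n) < e"
  then have uX: "u k \<in> X" for k by blast
  obtain a b where a: "a > 0" and b: "b > 0" and ab: "\<And>f. f \<in> X \<Longrightarrow> a * N f \<le> N' f \<and> N' f \<le> b * N f"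
    using assms unfolding equivalent_norms_def by blast
  have "\<forall>e>0. \<exists>M. \<forall>j\<ge>M. \<forall>k\<ge>M. N (\<lambda>n. u j n - u k n) < e"
  proof (intro allI impI)
    fix e :: real assume "e > 0"
    with cauchy a obtain M where M: "\<forall>j\<ge>M. \<forall>k\<ge>M. N' (\<lambda>n. u j n - u k n) < a * e"
      by (meson mult_pos_pos)
    have "N (\<lambda>n. u j n - u k n) < e" if "j \<ge> M" "k \<ge> M" for j k
    proof -
      have "a * N (\<lambda>n. u j n - u k n) \<le> N' (\<lambda>n. u j n - u k n)"
        using ab[OF diff_in[OF uX uX]] by blast
      also have "\<dots> < a * e"
        using M that by blast
      finally show ?thesis
        using a by simp
    qed
    then show "\<exists>M. \<forall>j\<ge>M. \<forall>k\<ge>M. N (\<lambda>n. u j n - u k n) < e" by blast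
  qed
  then have "\<exists>f\<in>X. (\<lambda>k. N (\<lambda>n. u k n - f n)) \<longlonglongrightarrow> 0"
    by (rule complete[of u, OF uX])
  then obtain f where f: "f \<in> X" and lim: "(\<lambda>k. N (\<lambda>n. u k n - f n)) \<longlonglongrightarrow> 0"
    ..
  have "(\<lambda>k. N' (\<lambda>n. u k n - f n)) \<longlonglongrightarrow> 0"
  proof (rule tendsto_sandwich[OF always_eventually always_eventually])
    show "\<forall>k. a * N (\<lambda>n. u k n - f n) \<le> N' (\<lambda>n. u k n - f n)"
      and "\<forall>k. N' (\<lambda>n. u k n - f n) \<le> b * N (\<lambda>n. u k n - f n)"
      using ab[OF diff_in[OF uX f]] by blast+
    show "(\<lambda>k. a * N (\<lambda>n. u k n - f n)) \<longlonglongrightarrow> 0"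
      and "(\<lambda>k. b * N (\<lambda>n. u k n - f n)) \<longlonglongrightarrow> 0"
      using tendsto_mult_right_zero[OF lim] by blast+
  qed
  with f show "\<exists>f\<in>X. (\<lambda>k. N' (\<lambda>n. u k n - f n)) \<longlonglongrightarrow> 0" by blast
qed

lemma norm_partial_sum_diff_le:
  fixes j k :: nat
  assumes "\<And>i. v i \<in> X" and "k \<le> j"
  shows "N (\<lambda>n. (\<Sum>i<j. v i n) - (\<Sum>i<k. v i n)) \<le> (\<Sum>i<j. N (v i)) - (\<Sum>i<k. N (v i))"
proof -
  have split: "(\<Sum>i<j. F i) - (\<Sum>i<k. F i) = (\<Sum>i\<in>{k..<j}. F i)" for F :: "nat \<Rightarrow> real"
    by (metis assms(2) atLeast0LessThan sum_diff_nat_ivl zero_le)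
  have "N (\<lambda>n. \<Sum>i\<in>{k..<j}. v i n) \<le> (\<Sum>i\<in>{k..<j}. N (v i))"
    by (rule norm_sum_le) (rule assms(1))
  then show ?thesis
    by (simp only: split)
qed

lemma absolutely_summable_converges:
  assumes vX: "\<And>i. v i \<in> X" and summable: "summable (\<lambda>i. N (v i))"
  obtains f where "f \<in> X" and "(\<lambda>k. N (\<lambda>n. (\<Sum>i<k. v i n) - f n)) \<longlonglongrightarrow> 0"
    and "N f \<le> (\<Sum>i. N (v i))"
proof -
  define s where "s k = (\<lambda>n. \<Sum>i<k. v i n)" for k
  define S where "S k = (\<Sum>i<k. N (v i))" for k
  have sX: "s k \<in> X" for k
    unfolding s_def by (rule sum_in) (rule vX)
  have s_diff_le: "N (\<lambda>n. s j n - s k n) \<le> S j - S k" if "k \<le> j" for j k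
    unfolding s_def S_def using norm_partial_sum_diff_le[OF vX that] .
  have s_diff: "N (\<lambda>n. s j n - s k n) \<le> \<bar>S j - S k\<bar>" for j k
  proof (cases "k \<le> j")
    case True
    then show ?thesis using s_diff_le[of k j] by linarith
  next
    case False
    then show ?thesis using s_diff_le[of j k] norm_minus_commute[OF sX sX, of j k] by linarith
  qed
  have "Cauchy S"
    using summable unfolding S_def by (simp add: Cauchy_convergent_iff summable_iff_convergent)
  have "\<forall>e>0. \<exists>M. \<forall>j\<ge>M. \<forall>k\<ge>M. N (\<lambda>n. s j n - s k n) < e"
  proof (intro allI impI)
    fix e :: real assume "e > 0"
    from CauchyD[OF \<open>Cauchy S\<close> \<open>e > 0\<close>]
    obtain M where M: "\<forall>j\<ge>M. \<forall>k\<ge>M. norm (S j - S k) < e" ..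
    have "N (\<lambda>n. s j n - s k n) < e" if "j \<ge> M" "k \<ge> M" for j k
    proof -
      have "\<bar>S j - S k\<bar> < e" using M that by simp
      with s_diff[of j k] show ?thesis by linarith
    qed
    then show "\<exists>M. \<forall>j\<ge>M. \<forall>k\<ge>M. N (\<lambda>n. s j n - s k n) < e" by blast
  qed
  then have "\<exists>f\<in>X. (\<lambda>k. N (\<lambda>n. s k n - f n)) \<longlonglongrightarrow> 0"
    by (rule complete[of s, OF sX])
  then obtain f where f: "f \<in> X" and lim: "(\<lambda>k. N (\<lambda>n. s k n - f n)) \<longlonglongrightarrow> 0"
    ..
  have N_f_le: "N f \<le> (\<Sum>i. N (v i)) + N (\<lambda>n. s k n - f n)" for k
  proof -
    have "N f \<le> N (s k) + N (\<lambda>n. s k n - f n)"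
      using norm_diff_le[OF sX diff_in[OF sX f], of k k] by simp
    moreover have "N (s k) \<le> S k"
      unfolding s_def S_def by (rule norm_sum_le) (rule vX)
    moreover have "S k \<le> (\<Sum>i. N (v i))"
      unfolding S_def using summable norm_nonneg[OF vX] by (intro sum_le_suminf) auto
    ultimately show ?thesis by linarith
  qed
  have "\<forall>\<^sub>F k in sequentially. N f \<le> (\<Sum>i. N (v i)) + N (\<lambda>n. s k n - f n)"
    using N_f_le by (intro always_eventually allI)
  from tendsto_lowerbound[OF tendsto_add[OF tendsto_const lim] this trivial_limit_sequentially]
  have "N f \<le> (\<Sum>i. N (v i)) + 0" .
  then have bound: "N f \<le> (\<Sum>i. N (v i))"
    by simp
  have "(\<lambda>k. N (\<lambda>n. (\<Sum>i<k. v i n) - f n)) \<longlonglongrightarrow> 0"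
    using lim unfolding s_def .
  from that[OF f this bound] show ?thesis .
qed

end

definition lattice_norm :: "((nat \<Rightarrow> real) \<Rightarrow> real) \<Rightarrow> (nat \<Rightarrow> real) \<Rightarrow> real" where
  "lattice_norm N f = (SUP h\<in>{h. \<forall>n. \<bar>h n\<bar> \<le> 1}. N (\<lambda>n. h n * f n))"

locale rectangular_sequence_space = banach_sequence_space +
  fixes C :: real
  assumes C_pos: "C > 0"
    and indicator_mult_in: "f \<in> X \<Longrightarrow> (\<lambda>n. indicator A n * f n) \<in> X"
    and norm_indicator_mult_le: "f \<in> X \<Longrightarrow> N (\<lambda>n. indicator A n * f n) \<le> C * N f"
begin

lemma coordinate_bounded: "\<exists>K. \<forall>f\<in>X. \<bar>f n\<bar> \<le> K * N f"
proof (cases "\<exists>y\<in>X. y n \<noteq> 0")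
  case True
  then obtain y where y: "y \<in> X" "y n \<noteq> 0" by blast
  define z where "z = (\<lambda>m. indicator {n} m * y m)"
  have zX: "z \<in> X"
    unfolding z_def using indicator_mult_in[OF y(1)] .
  have "z n \<noteq> 0"
    using y(2) by (simp add: z_def)
  then have Nz: "N z > 0"
    using norm_eq_zero_iff[OF zX] norm_nonneg[OF zX] by force
  have "\<bar>f n\<bar> \<le> C * \<bar>y n\<bar> / N z * N f" if f: "f \<in> X" for f
  proof -
    have "(\<lambda>m. indicator {n} m * f m) = (\<lambda>m. (f n / y n) * z m)"
      using y(2) by (auto simp: z_def indicator_def)
    then have "\<bar>f n / y n\<bar> * N z \<le> C * N f"
      using norm_indicator_mult_le[OF f, of "{n}"] norm_scale[OF zX, of "f n / y n"] by simp
    with y(2) Nz show ?thesis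
      by (simp add: abs_divide field_simps)
  qed
  then show ?thesis by blast
next
  case False
  then show ?thesis by (intro exI[of _ 0]) auto
qed

lemma tendsto_coordinate:
  assumes "\<And>k. u k \<in> X" and "f \<in> X" and "(\<lambda>k. N (\<lambda>n. u k n - f n)) \<longlonglongrightarrow> 0"
  shows "(\<lambda>k. u k n) \<longlonglongrightarrow> f n"
proof -
  obtain K where K: "\<forall>g\<in>X. \<bar>g n\<bar> \<le> K * N g"
    using coordinate_bounded by blast
  have bound: "norm (u k n - f n) \<le> K * N (\<lambda>n. u k n - f n)" for k
    using bspec[OF K diff_in[OF assms(1,2)], of k] by simp
  have "(\<lambda>k. u k n - f n) \<longlonglongrightarrow> 0"
  proof (rule Lim_null_comparison)
    show "\<forall>\<^sub>F k in sequentially. norm (u k n - f n) \<le> K * N (\<lambda>n. u k n - f n)"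
      using bound by (intro always_eventually allI)
    show "(\<lambda>k. K * N (\<lambda>n. u k n - f n)) \<longlonglongrightarrow> 0"
      using tendsto_mult_right_zero[OF assms(3)] .
  qed
  then show ?thesis
    by (simp add: LIM_zero_iff)
qed

lemma mult_nonneg_le_one:
  assumes g: "g \<in> X" and h: "\<And>n. 0 \<le> h n \<and> h n \<le> 1"
  shows "(\<lambda>n. h n * g n) \<in> X \<and> N (\<lambda>n. h n * g n) \<le> C * N g"
proof -
  obtain A where A: "\<And>n. (\<lambda>k. (1/2::real)^Suc k * indicator (A k) n) sums h n"
    using dyadic_expansion_fun[of h, OF h] by metis
  define v where "v k = (\<lambda>n. (1/2::real)^Suc k * (indicator (A k) n * g n))" for k
  have vX: "v k \<in> X" for k
    unfolding v_def by (intro scale_in indicator_mult_in g)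
  have Nv: "N (v k) \<le> (1/2)^Suc k * (C * N g)" for k
    unfolding v_def norm_scale[OF indicator_mult_in[OF g]]
    by (simp add: norm_indicator_mult_le[OF g])
  have geometric: "(\<lambda>k. (1/2)^Suc k * (C * N g)) sums (C * N g)"
    using sums_mult2[OF power_half_series, of "C * N g"] by simp
  have "norm (N (v k)) \<le> (1/2)^Suc k * (C * N g)" for k
    using Nv[of k] norm_nonneg[OF vX, of k] by simp
  then have summable: "summable (\<lambda>k. N (v k))"
    by (rule summable_comparison_test'[OF sums_summable[OF geometric]])
  obtain F where F: "F \<in> X" and lim: "(\<lambda>k. N (\<lambda>n. (\<Sum>i<k. v i n) - F n)) \<longlonglongrightarrow> 0"
    and NF: "N F \<le> (\<Sum>i. N (v i))"
    by (rule absolutely_summable_converges[OF vX summable])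
  have "F n = h n * g n" for n
  proof (rule LIMSEQ_unique)
    show "(\<lambda>k. \<Sum>i<k. v i n) \<longlonglongrightarrow> F n"
      using tendsto_coordinate[OF sum_in[OF vX] F lim] .
    have "(\<Sum>i<k. v i n) = (\<Sum>i<k. (1/2)^Suc i * indicator (A i) n) * g n" for k
      by (simp add: v_def sum_distrib_right mult.assoc)
    moreover have "(\<lambda>k. (\<Sum>i<k. (1/2)^Suc i * indicator (A i) n) * g n) \<longlonglongrightarrow> h n * g n"
      using A[of n] unfolding sums_def by (rule tendsto_mult_right)
    ultimately show "(\<lambda>k. \<Sum>i<k. v i n) \<longlonglongrightarrow> h n * g n"
      by simp
  qed
  then have "(\<lambda>n. h n * g n) = F" by auto
  moreover have "(\<Sum>i. N (v i)) \<le> C * N g"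
    using suminf_le[OF Nv summable sums_summable[OF geometric]] sums_unique[OF geometric] by simp
  ultimately show ?thesis
    using F NF by simp
qed

lemma mult_abs_le_one:
  assumes g: "g \<in> X" and h: "\<And>n. \<bar>h n\<bar> \<le> 1"
  shows "(\<lambda>n. h n * g n) \<in> X \<and> N (\<lambda>n. h n * g n) \<le> 2 * C * N g"
proof -
  have "0 \<le> max (h n) 0 \<and> max (h n) 0 \<le> 1" and "0 \<le> max (- h n) 0 \<and> max (- h n) 0 \<le> 1" for n
    using h[of n] by (auto simp: abs_le_iff)
  then have pos: "(\<lambda>n. max (h n) 0 * g n) \<in> X \<and> N (\<lambda>n. max (h n) 0 * g n) \<le> C * N g"
    and neg: "(\<lambda>n. max (- h n) 0 * g n) \<in> X \<and> N (\<lambda>n. max (- h n) 0 * g n) \<le> C * N g"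
    by (simp_all add: mult_nonneg_le_one[OF g])
  have "(\<lambda>n. h n * g n) = (\<lambda>n. max (h n) 0 * g n - max (- h n) 0 * g n)"
    by (rule ext) (simp add: max_def algebra_simps)
  moreover have "N (\<lambda>n. max (h n) 0 * g n - max (- h n) 0 * g n) \<le> C * N g + C * N g"
    using norm_diff_le[OF conjunct1[OF pos] conjunct1[OF neg]] pos neg by linarith
  ultimately show ?thesis
    using diff_in[OF conjunct1[OF pos] conjunct1[OF neg]] by simp
qed

lemma norm_mult_le_lattice_norm:
  assumes "f \<in> X" and "\<And>n. \<bar>h n\<bar> \<le> 1"
  shows "N (\<lambda>n. h n * f n) \<le> lattice_norm N f"
  unfolding lattice_norm_def
proof (rule cSUP_upper)
  show "bdd_above ((\<lambda>h. N (\<lambda>n. h n * f n)) ` {h. \<forall>n. \<bar>h n\<bar> \<le> 1})"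
    using mult_abs_le_one[OF assms(1)] by (intro bdd_aboveI2[of _ _ "2 * C * N f"]) auto
qed (use assms(2) in auto)

lemma norm_le_lattice_norm: "f \<in> X \<Longrightarrow> N f \<le> lattice_norm N f"
  using norm_mult_le_lattice_norm[of f "\<lambda>n. 1"] by simp

lemma lattice_norm_le: "f \<in> X \<Longrightarrow> lattice_norm N f \<le> 2 * C * N f"
  unfolding lattice_norm_def using mult_abs_le_one by (intro cSUP_least) (auto intro!: exI[of _ "\<lambda>n. 0"])

lemma lattice_norm_mono:
  assumes g: "g \<in> X" and fg: "\<And>n. \<bar>f n\<bar> \<le> \<bar>g n\<bar>"
  shows "f \<in> X \<and> lattice_norm N f \<le> lattice_norm N g"
proof -
  define k where "k n = (if g n = 0 then 0 else f n / g n)" for n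
  have k: "\<bar>k n\<bar> \<le> 1" for n
    using fg[of n] by (auto simp: k_def abs_divide divide_le_eq_1)
  have "f n = k n * g n" for n
    using fg[of n] by (auto simp: k_def)
  then have f_eq: "f = (\<lambda>n. k n * g n)" ..
  have "N (\<lambda>n. h n * f n) \<le> lattice_norm N g" if h: "\<forall>n. \<bar>h n\<bar> \<le> 1" for h
  proof -
    have "\<bar>h n * k n\<bar> \<le> 1" for n
      using h k[of n] by (auto simp: abs_mult intro: mult_le_one)
    then show ?thesis
      using norm_mult_le_lattice_norm[OF g, of "\<lambda>n. h n * k n"] by (simp add: f_eq mult.assoc)
  qed
  then have "lattice_norm N f \<le> lattice_norm N g"
    unfolding lattice_norm_def[of N f] by (intro cSUP_least) (auto intro!: exI[of _ "\<lambda>n. 0"])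
  moreover have "f \<in> X"
    using mult_abs_le_one[OF g k] f_eq by simp
  ultimately show ?thesis by blast
qed

lemma lattice_norm_scale_le:
  assumes f: "f \<in> X"
  shows "lattice_norm N (\<lambda>n. c * f n) \<le> \<bar>c\<bar> * lattice_norm N f"
proof -
  have "N (\<lambda>n. h n * (c * f n)) \<le> \<bar>c\<bar> * lattice_norm N f" if h: "\<forall>n. \<bar>h n\<bar> \<le> 1" for h
  proof -
    have "N (\<lambda>n. h n * (c * f n)) = \<bar>c\<bar> * N (\<lambda>n. h n * f n)"
      using norm_scale[of "\<lambda>n. h n * f n" c] mult_abs_le_one[OF f] h by (simp add: mult.left_commute)
    also have "\<dots> \<le> \<bar>c\<bar> * lattice_norm N f"
      using norm_mult_le_lattice_norm[OF f] h by (simp add: mult_left_mono)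
    finally show ?thesis .
  qed
  then show ?thesis
    unfolding lattice_norm_def[of N "\<lambda>n. c * f n"]
    by (intro cSUP_least) (auto intro!: exI[of _ "\<lambda>n. 0"])
qed

lemma lattice_norm_eq_zero_iff:
  assumes f: "f \<in> X"
  shows "lattice_norm N f = 0 \<longleftrightarrow> f = (\<lambda>n. 0)"
proof
  assume "lattice_norm N f = 0"
  then have "N f = 0"
    using norm_le_lattice_norm[OF f] norm_nonneg[OF f] by linarith
  then show "f = (\<lambda>n. 0)"
    using norm_eq_zero_iff[OF f] by blast
next
  assume "f = (\<lambda>n. 0)"
  then show "lattice_norm N f = 0"
    using norm_le_lattice_norm[OF f] lattice_norm_le[OF f] norm_zero by simp
qed

lemma lattice_norm_scale:
  assumes f: "f \<in> X"
  shows "lattice_norm N (\<lambda>n. c * f n) = \<bar>c\<bar> * lattice_norm N f"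
proof (cases "c = 0")
  case True
  then show ?thesis
    using lattice_norm_scale_le[OF f, of 0] norm_le_lattice_norm[OF zero_in] norm_zero by simp
next
  case False
  have "lattice_norm N (\<lambda>n. (1/c) * (c * f n)) \<le> \<bar>1/c\<bar> * lattice_norm N (\<lambda>n. c * f n)"
    using lattice_norm_scale_le[OF scale_in[OF f]] .
  with False have "\<bar>c\<bar> * lattice_norm N f \<le> lattice_norm N (\<lambda>n. c * f n)"
    by (simp add: abs_divide field_simps)
  with lattice_norm_scale_le[OF f, of c] show ?thesis by linarith
qed

lemma lattice_norm_triangle:
  assumes f: "f \<in> X" and g: "g \<in> X"
  shows "lattice_norm N (\<lambda>n. f n + g n) \<le> lattice_norm N f + lattice_norm N g"
proof -
  have "N (\<lambda>n. h n * (f n + g n)) \<le> lattice_norm N f + lattice_norm N g"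
    if h: "\<forall>n. \<bar>h n\<bar> \<le> 1" for h
  proof -
    have "N (\<lambda>n. h n * (f n + g n)) \<le> N (\<lambda>n. h n * f n) + N (\<lambda>n. h n * g n)"
      using norm_triangle mult_abs_le_one[OF f] mult_abs_le_one[OF g] h by (simp add: distrib_left)
    also have "\<dots> \<le> lattice_norm N f + lattice_norm N g"
      using norm_mult_le_lattice_norm f g h by (simp add: add_mono)
    finally show ?thesis .
  qed
  then show ?thesis
    unfolding lattice_norm_def[of N "\<lambda>n. f n + g n"]
    by (intro cSUP_least) (auto intro!: exI[of _ "\<lambda>n. 0"])
qed

lemma seq_norm_on_lattice_norm: "seq_norm_on X (lattice_norm N)"
  unfolding seq_norm_on_def
  using norm_le_lattice_norm norm_nonneg lattice_norm_eq_zero_iff lattice_norm_scale lattice_norm_triangle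
  by (meson order.trans)

lemma equivalent_norms_lattice_norm: "equivalent_norms X N (lattice_norm N)"
proof -
  have "\<forall>f\<in>X. 1 * N f \<le> lattice_norm N f \<and> lattice_norm N f \<le> (2 * C) * N f"
    using norm_le_lattice_norm lattice_norm_le by simp
  moreover have "(1::real) > 0" and "2 * C > 0"
    using C_pos by simp_all
  ultimately show ?thesis
    unfolding equivalent_norms_def by blast
qed

lemma banach_function_space_lattice_norm: "banach_function_space X (lattice_norm N)"
  using banach seq_norm_on_lattice_norm complete_if_equivalent_norm[OF equivalent_norms_lattice_norm]
    lattice_norm_mono
  unfolding banach_function_space_def banach_seq_space_def by blast

end

lemma rectangular_if_equivalent_function_norm:
  assumes "equivalent_norms X N N'" and "banach_function_space X N'"
  shows "rectangular X N"
proof -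
  obtain a b where a: "a > 0" and b: "b > 0" and ab: "\<And>f. f \<in> X \<Longrightarrow> a * N f \<le> N' f \<and> N' f \<le> b * N f"
    using assms(1) unfolding equivalent_norms_def by blast
  have solid: "\<And>f g. g \<in> X \<Longrightarrow> (\<forall>n. \<bar>f n\<bar> \<le> \<bar>g n\<bar>) \<Longrightarrow> f \<in> X \<and> N' f \<le> N' g"
    using assms(2) unfolding banach_function_space_def by blast
  have "(\<lambda>n. indicator A n * f n) \<in> X \<and> N (\<lambda>n. indicator A n * f n) \<le> b / a * N f"
    if f: "f \<in> X" for f and A :: "nat set"
  proof -
    have "\<forall>n. \<bar>indicator A n * f n\<bar> \<le> \<bar>f n\<bar>" by (simp add: indicator_def)
    from solid[OF f this]
    have fA: "(\<lambda>n. indicator A n * f n) \<in> X" and "N' (\<lambda>n. indicator A n * f n) \<le> N' f"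
      by simp_all
    then have "a * N (\<lambda>n. indicator A n * f n) \<le> b * N f"
      using ab[OF fA] ab[OF f] by linarith
    with fA a show ?thesis by (simp add: field_simps)
  qed
  with a b show ?thesis unfolding rectangular_def by (intro exI[of _ "b / a"]) auto
qed

lemma equivalent_function_norm_if_rectangular:
  assumes "banach_seq_space X N" and "rectangular X N"
  shows "\<exists>N'. equivalent_norms X N N' \<and> banach_function_space X N'"
proof -
  obtain C where "C > 0" and "\<forall>f\<in>X. \<forall>A :: nat set.
      (\<lambda>n. indicator A n * f n) \<in> X \<and> N (\<lambda>n. indicator A n * f n) \<le> C * N f"
    using assms(2) unfolding rectangular_def by blast
  then interpret rectangular_sequence_space X N C
    using assms(1) by unfold_locales blast+
  show ?thesis
    using equivalent_norms_lattice_norm banach_function_space_lattice_norm by blast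
qed

theorem corollary4p6:
  fixes \<mu> :: "nat measure"
    and X :: "(nat \<Rightarrow> real) set"
    and N :: "(nat \<Rightarrow> real) \<Rightarrow> real"
  assumes "space \<mu> = UNIV" and "sets \<mu> = Pow UNIV"
    and "finite_measure \<mu>"
    and "\<forall>n. emeasure \<mu> {n} > 0"
    and "banach_seq_space X N"
  shows "(\<exists>N'. equivalent_norms X N N' \<and> banach_function_space X N')
           \<longleftrightarrow> banach_rectangular_function_space X N"
  using rectangular_if_equivalent_function_norm equivalent_function_norm_if_rectangular assms(5)
  unfolding banach_rectangular_function_space_def by blast

end
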